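(* ($\mathbf{RCA_0}$) Let $T$ be a coded prae-dilator. Then the order $\vartheta(T)$ can be embedded into any Bachmann–Howard fixed point of $T$: whenever $(X,<_X)$ is a linear order with $X\subseteq\mathbb N$ and $\vartheta:D^T_X\to X$ is a Bachmann–Howard collapse, there is an order embedding $f:\vartheta(T)\to X$.
   Context: Conventions. Each natural number $n$ is identified with the linear order $\{0,\dots,n-1\}$; the category of natural numbers has these as objects and strictly increasing maps as morphisms. For a finite linear order $a$ write $|a|$ for its cardinality and $\operatorname{en}_a:|a|\to a$ for the unique order isomorphism; for an order embedding $f:a\to b$ of finite linear orders, $|f|:|a|\to|b|$ is the unique strictly increasing map with $\operatorname{en}_b\circ|f|=f\circ\operatorname{en}_a$. For $c\subseteq d$, $\iota_c^d$ is the inclusion. $[X]^{<\omega}$ is the set of finite subsets of $X$, $[f]^{<\omega}(a)=\{f(s)\mid s\in a\}$. For a linear order $X$, $a\in[X]^{<\omega}$, $x\in X$: $a<^{\mathrm{fin}}_X x$ means $s<_Xx$ for all $s\in a$. A coded prae-dilator (represented by sets of natural numbers coding the orders $T_n$, the maps $T_f$ and the supports) consists of a functor $T$ from the category of natural numbers to linear orders with fields in $\mathbb N$, and a natural transformation $\operatorname{supp}^T:T\Rightarrow[\cdot]^{<\omega}$ ($\operatorname{supp}^T_m\circ T_f=[f]^{<\omega}\circ\operatorname{supp}^T_n$ for $f:n\to m$) such that every $\sigma\in T_n$ lies in the range of $T_{\iota\circ\operatorname{en}}$, with $\operatorname{en}=\operatorname{en}_{\operatorname{supp}^T_n(\sigma)}$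 and $\iota$ the inclusion of $\operatorname{supp}^T_n(\sigma)$ into $n$. For a linear order $(X,<_X)$ with $X\subseteq\mathbb N$: $D^T_X=\{\langle a,\sigma\rangle\mid a\in[X]^{<\omega},\ \sigma\in T_{|a|},\ \operatorname{supp}^T_{|a|}(\sigma)=|a|\}$ ordered by $\langle a,\sigma\rangle<_{D^T_X}\langle b,\tau\rangle$ iff $T_{|\iota_a^{a\cup b}|}(\sigma)<_{T_{|a\cup b|}}T_{|\iota_b^{a\cup b}|}(\tau)$, with $\operatorname{supp}^{D^T}_X(\langle a,\sigma\rangle)=a$. A Bachmann–Howard collapse is a function $\vartheta:D^T_X\to X$ such that for all $\rho,\pi\in D^T_X$: (a) if $\rho<_{D^T_X}\pi$ and $\operatorname{supp}^{D^T}_X(\rho)<^{\mathrm{fin}}_X\vartheta(\pi)$ then $\vartheta(\rho)<_X\vartheta(\pi)$; (b) $\operatorname{supp}^{D^T}_X(\rho)<^{\mathrm{fin}}_X\vartheta(\rho)$. A linear order admitting such a collapse is a Bachmann–Howard fixed point of $T$. The order $\vartheta(T)$ (terms coded by natural numbers): defined by simultaneous recursion; whenever $s_0<_{\vartheta(T)}\dots<_{\vartheta(T)}s_{n-1}$ are in $\vartheta(T)$ ($n\geq0$) and $\sigma\in T_n$ with $\operatorname{supp}^T_n(\sigma)=n$, the term $\vartheta_\sigma^{s_0,\dots,s_{n-1}}$ is in $\vartheta(T)$. For $s=\vartheta_\sigma^{s_0,\dots,s_{n-1}}$, $t=\vartheta_\tau^{t_0,\dots,t_{m-1}}$: $s<_{\vartheta(T)}t$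 iff (i') there are strictly increasing $f:n\to k$, $g:m\to k$, $k=|\{s_0,\dots,s_{n-1},t_0,\dots,t_{m-1}\}|$, with $f(i)<g(j)\Leftrightarrow s_i<_{\vartheta(T)}t_j$ and $g(j)<f(i)\Leftrightarrow t_j<_{\vartheta(T)}s_i$, such that $T_f(\sigma)<_{T_k}T_g(\tau)$, and moreover $n=0$ or $s_{n-1}<_{\vartheta(T)}t$; or (ii') $m>0$ and $s\leq_{\vartheta(T)}t_{m-1}$. *)

theory Defs
  imports Main
begin

definition linord_on :: "'a set \<Rightarrow> ('a \<Rightarrow> 'a \<Rightarrow> bool) \<Rightarrow> bool" where
  "linord_on X lt \<longleftrightarrow>
     (\<forall>x\<in>X. \<not> lt x x) \<and>
     (\<forall>x\<in>X. \<forall>y\<in>X. \<forall>z\<in>X. lt x y \<longrightarrow> lt y z \<longrightarrow> lt x z) \<and>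
     (\<forall>x\<in>X. \<forall>y\<in>X. x = y \<or> lt x y \<or> lt y x)"

definition rk :: "('a \<Rightarrow> 'a \<Rightarrow> bool) \<Rightarrow> 'a set \<Rightarrow> 'a \<Rightarrow> nat" where
  "rk lt c x = card {y \<in> c. lt y x}"

definition en :: "('a \<Rightarrow> 'a \<Rightarrow> bool) \<Rightarrow> 'a set \<Rightarrow> nat \<Rightarrow> 'a" where
  "en lt a i = (THE x. x \<in> a \<and> rk lt a x = i)"

text \<open>|iota_a^c| : |a| \<rightarrow> |c| for a \<subseteq> c, i.e. en_c^{-1} \<circ> iota \<circ> en_a\<close>
definition collapse_incl :: "('a \<Rightarrow> 'a \<Rightarrow> bool) \<Rightarrow> 'a set \<Rightarrow> 'a set \<Rightarrow> nat \<Rightarrow> nat" where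
  "collapse_incl lt a c = (\<lambda>i. rk lt c (en lt a i))"

text \<open>Morphisms of the category of natural numbers: strictly increasing maps n \<rightarrow> m,
  represented by functions nat \<Rightarrow> nat (only the values below n matter).\<close>
definition incr :: "nat \<Rightarrow> nat \<Rightarrow> (nat \<Rightarrow> nat) \<Rightarrow> bool" where
  "incr n m f \<longleftrightarrow> (\<forall>i<n. f i < m) \<and> (\<forall>i j. i < j \<longrightarrow> j < n \<longrightarrow> f i < f j)"

record praedil =
  fld  :: "nat \<Rightarrow> nat set"
  tlt  :: "nat \<Rightarrow> nat \<Rightarrow> nat \<Rightarrow> bool"
  mor  :: "nat \<Rightarrow> nat \<Rightarrow> (nat \<Rightarrow> nat) \<Rightarrow> nat \<Rightarrow> nat"  \<comment> \<open>T_f for f : n \<rightarrow> m\<close>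
  supp :: "nat \<Rightarrow> nat \<Rightarrow> nat set"

definition prae_dilator :: "praedil \<Rightarrow> bool" where
  "prae_dilator T \<longleftrightarrow>
     \<comment> \<open>each T_n is a linear order\<close>
     (\<forall>n. linord_on (fld T n) (tlt T n)) \<and>
     \<comment> \<open>T_f is an order embedding T_n \<rightarrow> T_m\<close>
     (\<forall>n m f. incr n m f \<longrightarrow>
        (\<forall>\<sigma>\<in>fld T n. mor T n m f \<sigma> \<in> fld T m) \<and>
        (\<forall>\<sigma>\<in>fld T n. \<forall>\<tau>\<in>fld T n. tlt T n \<sigma> \<tau> \<longrightarrow> tlt T m (mor T n m f \<sigma>) (mor T n m f \<tau>))) \<and>
     \<comment> \<open>T_f depends only on the morphism f : n \<rightarrow> m\<close>
     (\<forall>n m f g. incr n m f \<longrightarrow> (\<forall>i<n. f i = g i) \<longrightarrow>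
        (\<forall>\<sigma>\<in>fld T n. mor T n m f \<sigma> = mor T n m g \<sigma>)) \<and>
     \<comment> \<open>functoriality\<close>
     (\<forall>n. \<forall>\<sigma>\<in>fld T n. mor T n n id \<sigma> = \<sigma>) \<and>
     (\<forall>n m k f g. incr n m f \<longrightarrow> incr m k g \<longrightarrow>
        (\<forall>\<sigma>\<in>fld T n. mor T n k (g \<circ> f) \<sigma> = mor T m k g (mor T n m f \<sigma>))) \<and>
     \<comment> \<open>supp_n : T_n \<rightarrow> [n]^{<omega}\<close>
     (\<forall>n. \<forall>\<sigma>\<in>fld T n. supp T n \<sigma> \<subseteq> {..<n}) \<and>
     \<comment> \<open>naturality of supp\<close>
     (\<forall>n m f. incr n m f \<longrightarrow> (\<forall>\<sigma>\<in>fld T n. supp T m (mor T n m f \<sigma>) = f ` supp T n \<sigma>)) \<and>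
     \<comment> \<open>support condition: sigma is in the range of T_{iota \<circ> en}\<close>
     (\<forall>n. \<forall>\<sigma>\<in>fld T n. \<exists>\<tau>\<in>fld T (card (supp T n \<sigma>)).
        mor T (card (supp T n \<sigma>)) n (en (<) (supp T n \<sigma>)) \<tau> = \<sigma>)"

definition DT :: "praedil \<Rightarrow> nat set \<Rightarrow> (nat set \<times> nat) set" where
  "DT T X = {(a, \<sigma>). a \<subseteq> X \<and> finite a \<and> \<sigma> \<in> fld T (card a) \<and> supp T (card a) \<sigma> = {..<card a}}"

definition DT_less :: "praedil \<Rightarrow> (nat \<Rightarrow> nat \<Rightarrow> bool) \<Rightarrow> nat set \<times> nat \<Rightarrow> nat set \<times> nat \<Rightarrow> bool" where
  "DT_less T lt \<rho> \<pi> = (case \<rho> of (a, \<sigma>) \<Rightarrow> case \<pi> of (b, \<tau>) \<Rightarrow>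
     tlt T (card (a \<union> b))
       (mor T (card a) (card (a \<union> b)) (collapse_incl lt a (a \<union> b)) \<sigma>)
       (mor T (card b) (card (a \<union> b)) (collapse_incl lt b (a \<union> b)) \<tau>))"

definition BH_collapse :: "praedil \<Rightarrow> nat set \<Rightarrow> (nat \<Rightarrow> nat \<Rightarrow> bool) \<Rightarrow> (nat set \<times> nat \<Rightarrow> nat) \<Rightarrow> bool" where
  "BH_collapse T X lt \<theta> \<longleftrightarrow>
     (\<forall>\<rho>\<in>DT T X. \<theta> \<rho> \<in> X) \<and>
     (\<forall>\<rho>\<in>DT T X. \<forall>\<pi>\<in>DT T X. DT_less T lt \<rho> \<pi> \<longrightarrow> (\<forall>s\<in>fst \<rho>. lt s (\<theta> \<pi>)) \<longrightarrow> lt (\<theta> \<rho>) (\<theta> \<pi>)) \<and>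
     (\<forall>\<rho>\<in>DT T X. \<forall>s\<in>fst \<rho>. lt s (\<theta> \<rho>))"

text \<open>Th sigma [s_0,...,s_{n-1}] stands for the term vartheta_sigma^{s_0,...,s_{n-1}}.\<close>
datatype trm = Th nat "trm list"

function th_less :: "praedil \<Rightarrow> trm \<Rightarrow> trm \<Rightarrow> bool" where
  "th_less T (Th \<sigma> ss) (Th \<tau> ts) =
    ((\<exists>f g.
        incr (length ss) (card (set ss \<union> set ts)) f \<and>
        incr (length ts) (card (set ss \<union> set ts)) g \<and>
        (\<forall>(i, x)\<in>set (zip [0..<length ss] ss). \<forall>(j, y)\<in>set (zip [0..<length ts] ts).
            (f i < g j \<longleftrightarrow> th_less T x y) \<and> (g j < f i \<longleftrightarrow> th_less T y x)) \<and>
        tlt T (card (set ss \<union> set ts))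
          (mor T (length ss) (card (set ss \<union> set ts)) f \<sigma>)
          (mor T (length ts) (card (set ss \<union> set ts)) g \<tau>) \<and>
        (if ss = [] then True else th_less T (last ss) (Th \<tau> ts)))
     \<or> (if ts = [] then False else (Th \<sigma> ss = last ts \<or> th_less T (Th \<sigma> ss) (last ts))))"
  by pat_completeness auto
lemma size_in_list_le: "x \<in> set xs \<Longrightarrow> size x \<le> size_list size xs" for x :: trm
  by (simp add: size_list_estimation')

termination
proof (relation "measure (\<lambda>(T, s, t). size s + size t)")
qed (auto dest!: set_zip_rightD size_in_list_le simp: le_imp_less_Suc intro!: le_imp_less_Suc size_in_list_le)

fun in_theta :: "praedil \<Rightarrow> trm \<Rightarrow> bool" where
  "in_theta T (Th \<sigma> ss) =
     ((\<forall>x\<in>set ss. in_theta T x) \<and> successively (th_less T) ss \<and>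
      \<sigma> \<in> fld T (length ss) \<and> supp T (length ss) \<sigma> = {..<length ss})"

end

theory Submission
  imports Defs
begin

(* The embedding sends the term \<vartheta>_\<sigma>^{s_0,...,s_{n-1}} to \<vartheta>(<{f s_0, ..., f s_{n-1}}, \<sigma>>).
   Because the collapse is injective on the linear order D^T_X, its two defining properties
   determine the order of collapsed values completely: \<vartheta>(\<rho>) < \<vartheta>(\<pi>) iff either \<rho> < \<pi> and
   supp \<rho> < \<vartheta>(\<pi>), or \<vartheta>(\<rho>) \<le> y for some y \<in> supp \<pi>. These are clauses (i') and (ii') of the
   definition of \<vartheta>(T), once one observes that the maps f, g in (i') are forced to be the
   collapsed inclusions into the union of the two supports, so that comparing in T_k is comparing
   in D^T_X. Membership in X, injectivity and order preservation are therefore proved together,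
   by induction on pairs of terms. *)

section \<open>Ranks in finite linear orders\<close>

lemma sorted_wrt_last:
  assumes "sorted_wrt P xs" and "x \<in> set xs"
  shows "x = last xs \<or> P x (last xs)"
proof -
  have split: "xs = butlast xs @ [last xs]"
    using assms(2) by (metis append_butlast_last_id empty_iff list.set(1))
  then have "sorted_wrt P (butlast xs @ [last xs])" using assms(1) by simp
  moreover have "x \<in> set (butlast xs @ [last xs])" using split assms(2) by simp
  ultimately show ?thesis unfolding sorted_wrt_append by auto
qed

locale strict_linorder_on =
  fixes X :: "'a set" and lt :: "'a \<Rightarrow> 'a \<Rightarrow> bool"
  assumes linord: "linord_on X lt"
begin

lemma lt_irrefl: "x \<in> X \<Longrightarrow> \<not> lt x x"
  using linord unfolding linord_on_def by blast

lemma lt_trans: "x \<in> X \<Longrightarrow> y \<in> X \<Longrightarrow> z \<in> X \<Longrightarrow> lt x y \<Longrightarrow> lt y z \<Longrightarrow> lt x z"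
  using linord unfolding linord_on_def by blast

lemma lt_total: "x \<in> X \<Longrightarrow> y \<in> X \<Longrightarrow> x = y \<or> lt x y \<or> lt y x"
  using linord unfolding linord_on_def by blast

lemma lt_asym: "x \<in> X \<Longrightarrow> y \<in> X \<Longrightarrow> lt x y \<Longrightarrow> \<not> lt y x"
  using lt_irrefl lt_trans by blast

context
  fixes c :: "'a set"
  assumes fin: "finite c" and sub: "c \<subseteq> X"
begin

lemma rk_less_card: "x \<in> c \<Longrightarrow> rk lt c x < card c"
  unfolding rk_def using fin sub lt_irrefl by (intro psubset_card_mono) auto

lemma rk_strict_mono: "x \<in> c \<Longrightarrow> y \<in> c \<Longrightarrow> lt x y \<Longrightarrow> rk lt c x < rk lt c y"
  unfolding rk_def using fin sub lt_irrefl lt_trans[of _ x y]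
  by (intro psubset_card_mono) auto

lemma rk_less_rk_iff: "x \<in> c \<Longrightarrow> y \<in> c \<Longrightarrow> rk lt c x < rk lt c y \<longleftrightarrow> lt x y"
  using rk_strict_mono lt_total sub by (metis less_asym less_irrefl subsetD)

lemma inj_on_rk: "inj_on (rk lt c) c"
  using rk_strict_mono lt_total sub unfolding inj_on_def by (metis less_irrefl subsetD)

lemma rk_image: "rk lt c ` c = {..<card c}"
  using rk_less_card inj_on_rk by (intro card_subset_eq) (auto simp: card_image)

lemma en_rk: "x \<in> c \<Longrightarrow> en lt c (rk lt c x) = x"
  unfolding en_def using inj_on_rk by (auto intro: the_equality dest: inj_onD)

lemma en_in_rk_en:
  assumes "i < card c"
  shows "en lt c i \<in> c" and "rk lt c (en lt c i) = i"
proof -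
  obtain x where "x \<in> c" "rk lt c x = i" using rk_image assms by (metis imageE lessThan_iff)
  then show "en lt c i \<in> c" "rk lt c (en lt c i) = i" using en_rk by auto
qed

lemma en_image: "en lt c ` {..<card c} = c"
  using en_in_rk_en(1) en_rk rk_less_card by (auto intro!: image_eqI)

lemma strict_mono_into_card_eq_rk:
  assumes into: "\<And>x. x \<in> c \<Longrightarrow> h x < card c"
    and mono: "\<And>x y. x \<in> c \<Longrightarrow> y \<in> c \<Longrightarrow> lt x y \<Longrightarrow> h x < h y"
    and "x \<in> c"
  shows "h x = rk lt c x"
proof -
  have h_less_iff: "h y < h x \<longleftrightarrow> lt y x" if "y \<in> c" for y
    using mono lt_total sub that \<open>x \<in> c\<close> by (metis less_asym less_irrefl subsetD)
  have inj: "inj_on h c"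
    using mono lt_total sub unfolding inj_on_def by (metis less_irrefl subsetD)
  then have onto: "h ` c = {..<card c}"
    using into by (intro card_subset_eq) (auto simp: card_image)
  have "{..<h x} = h ` {y \<in> c. lt y x}"
  proof
    show "{..<h x} \<subseteq> h ` {y \<in> c. lt y x}"
    proof
      fix i assume i: "i \<in> {..<h x}"
      then obtain y where "y \<in> c" "i = h y"
        using onto into[OF \<open>x \<in> c\<close>] by (metis imageE lessThan_iff order.strict_trans)
      then show "i \<in> h ` {y \<in> c. lt y x}" using h_less_iff i by auto
    qed
  qed (use h_less_iff in auto)
  then have "h x = card (h ` {y \<in> c. lt y x})" by (metis card_lessThan)
  also have "\<dots> = rk lt c x"
    unfolding rk_def by (rule card_image) (rule inj_on_subset[OF inj], auto)
  finally show ?thesis .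
qed

end

lemma collapse_incl_incr:
  assumes "finite c" "c \<subseteq> X" "a \<subseteq> c"
  shows "incr (card a) (card c) (collapse_incl lt a c)"
proof -
  have a: "finite a" "a \<subseteq> X" using assms finite_subset by auto
  show ?thesis unfolding incr_def collapse_incl_def
  proof (intro conjI allI impI)
    fix i assume "i < card a"
    then show "rk lt c (en lt a i) < card c"
      using en_in_rk_en[OF a] rk_less_card[OF assms(1,2)] assms(3) by blast
  next
    fix i j assume ij: "i < j" "j < card a"
    then have "lt (en lt a i) (en lt a j)"
      using en_in_rk_en[OF a] rk_less_rk_iff[OF a] by (metis order.strict_trans)
    then show "rk lt c (en lt a i) < rk lt c (en lt a j)"
      using rk_strict_mono[OF assms(1,2)] en_in_rk_en(1)[OF a] ij assms(3)
      by (meson order.strict_trans subsetD)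
  qed
qed

lemma collapse_incl_image:
  assumes "finite c" "c \<subseteq> X" "a \<subseteq> c"
  shows "collapse_incl lt a c ` {..<card a} = rk lt c ` a"
proof -
  have "finite a" "a \<subseteq> X" using assms finite_subset by auto
  moreover have "collapse_incl lt a c ` {..<card a} = rk lt c ` en lt a ` {..<card a}"
    unfolding collapse_incl_def by (simp add: image_image)
  ultimately show ?thesis using en_image by simp
qed

lemma successively_imp_sorted_wrt: "set xs \<subseteq> X \<Longrightarrow> successively lt xs \<Longrightarrow> sorted_wrt lt xs"
  using successively_iff_sorted_wrt_strong lt_trans by (metis subsetD)

context
  fixes xs :: "'a list"
  assumes sorted: "sorted_wrt lt xs" and set_sub: "set xs \<subseteq> X"
begin

lemma sorted_wrt_distinct: "distinct xs"
  using sorted set_sub by (induction xs) (auto dest: lt_irrefl)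

lemma card_set_sorted: "card (set xs) = length xs"
  by (rule distinct_card[OF sorted_wrt_distinct])

lemma sorted_wrt_nth_less_iff:
  assumes "i < length xs" "j < length xs"
  shows "lt (xs!i) (xs!j) \<longleftrightarrow> i < j"
  using sorted_wrt_nth_less[OF sorted] lt_asym lt_irrefl set_sub assms
  by (metis linorder_neqE_nat nth_mem subsetD)

lemma rk_sorted_nth:
  assumes "i < length xs"
  shows "rk lt (set xs) (xs!i) = i"
proof -
  have "{y \<in> set xs. lt y (xs!i)} = (!) xs ` {..<i}"
  proof
    show "{y \<in> set xs. lt y (xs!i)} \<subseteq> (!) xs ` {..<i}"
      using sorted_wrt_nth_less_iff assms by (auto simp: in_set_conv_nth)
    show "(!) xs ` {..<i} \<subseteq> {y \<in> set xs. lt y (xs!i)}"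
      using sorted_wrt_nth_less_iff assms by auto
  qed
  moreover have "inj_on ((!) xs) {..<i}"
    using inj_on_nth[OF sorted_wrt_distinct] assms by auto
  ultimately show ?thesis unfolding rk_def by (simp add: card_image)
qed

lemma en_sorted_nth: "i < length xs \<Longrightarrow> en lt (set xs) i = xs!i"
  using en_rk[of "set xs" "xs!i"] rk_sorted_nth set_sub by auto

lemma collapse_incl_sorted_nth:
  "i < length xs \<Longrightarrow> collapse_incl lt (set xs) c i = rk lt c (xs!i)"
  unfolding collapse_incl_def by (simp add: en_sorted_nth)

end

lemma sorted_wrt_ball_less_iff_last:
  assumes "sorted_wrt lt xs" "set xs \<subseteq> X" "z \<in> X"
  shows "(\<forall>x\<in>set xs. lt x z) \<longleftrightarrow> xs = [] \<or> lt (last xs) z"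
proof
  assume "xs = [] \<or> lt (last xs) z"
  show "\<forall>x\<in>set xs. lt x z"
  proof
    fix x assume x: "x \<in> set xs"
    then have "xs \<noteq> []" by auto
    then have "lt (last xs) z" "last xs \<in> set xs" using \<open>xs = [] \<or> lt (last xs) z\<close> by auto
    then show "lt x z"
      using sorted_wrt_last[OF assms(1) x] lt_trans[OF _ _ assms(3), of x "last xs"] x assms(2)
      by blast
  qed
qed (cases "xs = []", simp_all)

lemma sorted_wrt_bex_geq_iff_last:
  assumes "sorted_wrt lt ys" "set ys \<subseteq> X" "z \<in> X"
  shows "(\<exists>y\<in>set ys. z = y \<or> lt z y) \<longleftrightarrow> ys \<noteq> [] \<and> (z = last ys \<or> lt z (last ys))"
proof
  assume "\<exists>y\<in>set ys. z = y \<or> lt z y"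
  then obtain y where y: "y \<in> set ys" "z = y \<or> lt z y" by blast
  then have "ys \<noteq> []" by auto
  then have "last ys \<in> set ys" by simp
  then show "ys \<noteq> [] \<and> (z = last ys \<or> lt z (last ys))"
    using sorted_wrt_last[OF assms(1) y(1)] lt_trans[OF assms(3), of y "last ys"] y assms(2)
      \<open>ys \<noteq> []\<close> by blast
qed auto

lemma sorted_wrt_set_eq:
  assumes "sorted_wrt lt xs" "set xs \<subseteq> X" "sorted_wrt lt ys" "set ys \<subseteq> X"
    and "set xs = set ys"
  shows "xs = ys"
proof (rule nth_equalityI)
  show "length xs = length ys"
    using card_set_sorted[OF assms(1,2)] card_set_sorted[OF assms(3,4)] assms(5) by simp
  then show "xs!i = ys!i" if "i < length xs" for i
    using en_sorted_nth[OF assms(1,2) that] en_sorted_nth[OF assms(3,4)] that assms(5) by simp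
qed

lemma interleaving_eq_rk:
  assumes xs: "sorted_wrt lt xs" "set xs \<subseteq> X" and ys: "sorted_wrt lt ys" "set ys \<subseteq> X"
    and c: "c = set xs \<union> set ys"
    and f: "incr (length xs) (card c) f" and g: "incr (length ys) (card c) g"
    and cross: "\<forall>i<length xs. \<forall>j<length ys.
      (f i < g j \<longleftrightarrow> lt (xs!i) (ys!j)) \<and> (g j < f i \<longleftrightarrow> lt (ys!j) (xs!i))"
  shows "\<forall>i<length xs. f i = rk lt c (xs!i)" and "\<forall>j<length ys. g j = rk lt c (ys!j)"
proof -
  define h where "h x = (if x \<in> set xs then f (rk lt (set xs) x) else g (rk lt (set ys) x))" for x
  have h_xs: "h (xs!i) = f i" if "i < length xs" for i
    using that rk_sorted_nth[OF xs] by (simp add: h_def)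
  have h_ys: "h (ys!j) = g j" if j: "j < length ys" for j
  proof (cases "ys!j \<in> set xs")
    case True
    then obtain i where i: "i < length xs" "xs!i = ys!j" by (auto simp: in_set_conv_nth)
    then have "\<not> f i < g j" "\<not> g j < f i"
      using cross j lt_irrefl ys(2) nth_mem by (metis subsetD)+
    then have "f i = g j" by simp
    then show ?thesis using h_xs[OF i(1)] i(2) by simp
  next
    case False
    then show ?thesis using rk_sorted_nth[OF ys j] by (simp add: h_def)
  qed
  have c_cases: "(\<exists>i<length xs. x = xs!i) \<or> (\<exists>j<length ys. x = ys!j)" if "x \<in> c" for x
    using that c by (auto simp: in_set_conv_nth)
  have "h x = rk lt c x" if "x \<in> c" for x
  proof (rule strict_mono_into_card_eq_rk[OF _ _ _ _ that])
    show "finite c" "c \<subseteq> X" using c xs ys by auto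
    show "h x < card c" if "x \<in> c" for x
      using c_cases[OF that] h_xs h_ys f g unfolding incr_def by auto
    show "h x < h y" if "x \<in> c" "y \<in> c" "lt x y" for x y
      using c_cases[OF that(1)] c_cases[OF that(2)] that(3) f g cross h_xs h_ys
        sorted_wrt_nth_less_iff[OF xs] sorted_wrt_nth_less_iff[OF ys]
      unfolding incr_def by auto
  qed
  then show "\<forall>i<length xs. f i = rk lt c (xs!i)" "\<forall>j<length ys. g j = rk lt c (ys!j)"
    using h_xs h_ys c by auto
qed

lemma collapse_incl_interleaving:
  assumes xs: "sorted_wrt lt xs" "set xs \<subseteq> X" and ys: "sorted_wrt lt ys" "set ys \<subseteq> X"
    and c: "c = set xs \<union> set ys"
  defines "f \<equiv> collapse_incl lt (set xs) c" and "g \<equiv> collapse_incl lt (set ys) c"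
  shows "incr (length xs) (card c) f" and "incr (length ys) (card c) g"
    and "\<forall>i<length xs. \<forall>j<length ys.
      (f i < g j \<longleftrightarrow> lt (xs!i) (ys!j)) \<and> (g j < f i \<longleftrightarrow> lt (ys!j) (xs!i))"
proof -
  have fin: "finite c" "c \<subseteq> X" using c xs ys by auto
  show "incr (length xs) (card c) f"
    using collapse_incl_incr[OF fin, of "set xs"] c by (simp add: f_def card_set_sorted[OF xs])
  show "incr (length ys) (card c) g"
    using collapse_incl_incr[OF fin, of "set ys"] c by (simp add: g_def card_set_sorted[OF ys])
  show "\<forall>i<length xs. \<forall>j<length ys.
      (f i < g j \<longleftrightarrow> lt (xs!i) (ys!j)) \<and> (g j < f i \<longleftrightarrow> lt (ys!j) (xs!i))"
  proof (intro allI impI)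
    fix i j assume i: "i < length xs" and j: "j < length ys"
    then have "xs!i \<in> c" "ys!j \<in> c" using c by auto
    then show "(f i < g j \<longleftrightarrow> lt (xs!i) (ys!j)) \<and> (g j < f i \<longleftrightarrow> lt (ys!j) (xs!i))"
      using collapse_incl_sorted_nth[OF xs i] collapse_incl_sorted_nth[OF ys j] rk_less_rk_iff[OF fin]
      unfolding f_def g_def by simp
  qed
qed

end

section \<open>Prae-dilators and Bachmann-Howard collapses\<close>

context
  fixes T :: praedil
  assumes T: "prae_dilator T"
begin

lemma prae_dilator_linorder: "strict_linorder_on (fld T n) (tlt T n)"
  using T unfolding prae_dilator_def strict_linorder_on_def by (elim conjE) blast

lemma prae_dilator_mor_in_fld: "incr n m f \<Longrightarrow> \<sigma> \<in> fld T n \<Longrightarrow> mor T n m f \<sigma> \<in> fld T m"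
  using T unfolding prae_dilator_def by (elim conjE) blast

lemma prae_dilator_mor_mono:
  "incr n m f \<Longrightarrow> \<sigma> \<in> fld T n \<Longrightarrow> \<tau> \<in> fld T n \<Longrightarrow> tlt T n \<sigma> \<tau> \<Longrightarrow>
    tlt T m (mor T n m f \<sigma>) (mor T n m f \<tau>)"
  using T unfolding prae_dilator_def by (elim conjE) blast

lemma prae_dilator_mor_inj:
  assumes f: "incr n m f" and "\<sigma> \<in> fld T n" "\<tau> \<in> fld T n"
    and eq: "mor T n m f \<sigma> = mor T n m f \<tau>"
  shows "\<sigma> = \<tau>"
proof (rule ccontr)
  assume "\<sigma> \<noteq> \<tau>"
  then have "tlt T n \<sigma> \<tau> \<or> tlt T n \<tau> \<sigma>"
    using strict_linorder_on.lt_total[OF prae_dilator_linorder] assms by blast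
  then have "tlt T m (mor T n m f \<sigma>) (mor T n m f \<tau>) \<or> tlt T m (mor T n m f \<tau>) (mor T n m f \<sigma>)"
    using prae_dilator_mor_mono[OF f] assms by blast
  then show False
    using eq strict_linorder_on.lt_irrefl[OF prae_dilator_linorder] prae_dilator_mor_in_fld[OF f] assms
    by auto
qed

lemma prae_dilator_mor_cong:
  "incr n m f \<Longrightarrow> (\<And>i. i < n \<Longrightarrow> f i = g i) \<Longrightarrow> \<sigma> \<in> fld T n \<Longrightarrow> mor T n m f \<sigma> = mor T n m g \<sigma>"
  using T unfolding prae_dilator_def by (elim conjE) blast

lemma prae_dilator_supp_mor:
  "incr n m f \<Longrightarrow> \<sigma> \<in> fld T n \<Longrightarrow> supp T m (mor T n m f \<sigma>) = f ` supp T n \<sigma>"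
  using T unfolding prae_dilator_def by (elim conjE) simp

end

locale praedil_over_order = strict_linorder_on X lt
  for X :: "nat set" and lt :: "nat \<Rightarrow> nat \<Rightarrow> bool" +
  fixes T :: praedil
  assumes prae_dil: "prae_dilator T"
begin

lemma supp_mor_collapse_incl:
  assumes "(a, \<sigma>) \<in> DT T X" and "a \<subseteq> c" "finite c" "c \<subseteq> X"
  shows "supp T (card c) (mor T (card a) (card c) (collapse_incl lt a c) \<sigma>) = rk lt c ` a"
  using prae_dilator_supp_mor[OF prae_dil collapse_incl_incr[OF assms(3,4,2)]]
    collapse_incl_image[OF assms(3,4,2)] assms(1)
  unfolding DT_def by auto

lemmas tlt_total = strict_linorder_on.lt_total[OF prae_dilator_linorder[OF prae_dil]]

lemma DT_less_trichotomy:
  assumes "\<rho> \<in> DT T X" "\<pi> \<in> DT T X"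
  shows "DT_less T lt \<rho> \<pi> \<or> DT_less T lt \<pi> \<rho> \<or> \<rho> = \<pi>"
proof -
  obtain a \<sigma> b \<tau> where \<rho>: "\<rho> = (a, \<sigma>)" and \<pi>: "\<pi> = (b, \<tau>)" by fastforce
  have a: "finite a" "a \<subseteq> X" "\<sigma> \<in> fld T (card a)"
    and b: "finite b" "b \<subseteq> X" "\<tau> \<in> fld T (card b)"
    using assms unfolding \<rho> \<pi> DT_def by auto
  define c where "c = a \<union> b"
  have c: "finite c" "c \<subseteq> X" "a \<subseteq> c" "b \<subseteq> c" using a b by (auto simp: c_def)
  let ?x = "mor T (card a) (card c) (collapse_incl lt a c) \<sigma>"
  let ?y = "mor T (card b) (card c) (collapse_incl lt b c) \<tau>"
  have incr: "incr (card a) (card c) (collapse_incl lt a c)"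
    "incr (card b) (card c) (collapse_incl lt b c)"
    using collapse_incl_incr c by auto
  have "\<rho> = \<pi>" if "?x = ?y"
  proof -
    have "rk lt c ` a = rk lt c ` b"
      using that supp_mor_collapse_incl assms c unfolding \<rho> \<pi> by metis
    then have "a = b" using inj_on_rk[OF c(1,2)] c(3,4) by (simp add: inj_on_image_eq_iff)
    then show "\<rho> = \<pi>" using prae_dilator_mor_inj[OF prae_dil incr(1) a(3)] b(3) that \<rho> \<pi> by auto
  qed
  moreover have "DT_less T lt \<rho> \<pi> \<longleftrightarrow> tlt T (card c) ?x ?y"
    and "DT_less T lt \<pi> \<rho> \<longleftrightarrow> tlt T (card c) ?y ?x"
    unfolding \<rho> \<pi> DT_less_def c_def by (simp_all add: Un_commute)
  ultimately show ?thesis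
    using tlt_total prae_dilator_mor_in_fld[OF prae_dil] incr a(3) b(3) by blast
qed

lemma sorted_in_DT:
  assumes "sorted_wrt lt xs" "set xs \<subseteq> X"
    and "\<sigma> \<in> fld T (length xs)" "supp T (length xs) \<sigma> = {..<length xs}"
  shows "(set xs, \<sigma>) \<in> DT T X"
  using assms card_set_sorted[OF assms(1,2)] unfolding DT_def by simp

lemma interleaving_iff_DT_less:
  assumes xs: "sorted_wrt lt xs" "set xs \<subseteq> X" and ys: "sorted_wrt lt ys" "set ys \<subseteq> X"
    and \<sigma>: "\<sigma> \<in> fld T (length xs)" and \<tau>: "\<tau> \<in> fld T (length ys)"
  defines "k \<equiv> card (set xs \<union> set ys)"
  shows "(\<exists>f g. incr (length xs) k f \<and> incr (length ys) k g \<and>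
      (\<forall>i<length xs. \<forall>j<length ys.
        (f i < g j \<longleftrightarrow> lt (xs!i) (ys!j)) \<and> (g j < f i \<longleftrightarrow> lt (ys!j) (xs!i))) \<and>
      tlt T k (mor T (length xs) k f \<sigma>) (mor T (length ys) k g \<tau>))
    \<longleftrightarrow> DT_less T lt (set xs, \<sigma>) (set ys, \<tau>)"
    (is "?interleaving \<longleftrightarrow> _")
proof -
  define c where "c = set xs \<union> set ys"
  define f0 where "f0 = collapse_incl lt (set xs) c"
  define g0 where "g0 = collapse_incl lt (set ys) c"
  have k: "k = card c" by (simp add: k_def c_def)
  note f0_g0 = collapse_incl_interleaving[OF xs ys c_def, folded f0_def g0_def k]
  have DT_less_iff: "DT_less T lt (set xs, \<sigma>) (set ys, \<tau>) \<longleftrightarrow>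
      tlt T k (mor T (length xs) k f0 \<sigma>) (mor T (length ys) k g0 \<tau>)"
    unfolding DT_less_def f0_def g0_def k c_def
    by (simp add: card_set_sorted[OF xs] card_set_sorted[OF ys])
  show ?thesis
  proof
    assume ?interleaving
    then obtain f g where f: "incr (length xs) k f" and g: "incr (length ys) k g"
      and cross: "\<forall>i<length xs. \<forall>j<length ys.
        (f i < g j \<longleftrightarrow> lt (xs!i) (ys!j)) \<and> (g j < f i \<longleftrightarrow> lt (ys!j) (xs!i))"
      and less: "tlt T k (mor T (length xs) k f \<sigma>) (mor T (length ys) k g \<tau>)"
      by blast
    note unique = interleaving_eq_rk[OF xs ys c_def f[unfolded k] g[unfolded k] cross]
    have "mor T (length xs) k f \<sigma> = mor T (length xs) k f0 \<sigma>"
      using unique(1) collapse_incl_sorted_nth[OF xs]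
      by (intro prae_dilator_mor_cong[OF prae_dil f _ \<sigma>]) (simp add: f0_def)
    moreover have "mor T (length ys) k g \<tau> = mor T (length ys) k g0 \<tau>"
      using unique(2) collapse_incl_sorted_nth[OF ys]
      by (intro prae_dilator_mor_cong[OF prae_dil g _ \<tau>]) (simp add: g0_def)
    ultimately show "DT_less T lt (set xs, \<sigma>) (set ys, \<tau>)" using less DT_less_iff by simp
  next
    assume "DT_less T lt (set xs, \<sigma>) (set ys, \<tau>)"
    then show ?interleaving using f0_g0 DT_less_iff by blast
  qed
qed

end

locale BH_fixed_point = praedil_over_order +
  fixes \<theta> :: "nat set \<times> nat \<Rightarrow> nat"
  assumes BH: "BH_collapse T X lt \<theta>"
begin

lemma collapse_in_X: "\<rho> \<in> DT T X \<Longrightarrow> \<theta> \<rho> \<in> X"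
  using BH unfolding BH_collapse_def by blast

lemma collapse_less:
  "\<rho> \<in> DT T X \<Longrightarrow> \<pi> \<in> DT T X \<Longrightarrow> DT_less T lt \<rho> \<pi> \<Longrightarrow> \<forall>s\<in>fst \<rho>. lt s (\<theta> \<pi>) \<Longrightarrow>
    lt (\<theta> \<rho>) (\<theta> \<pi>)"
  using BH unfolding BH_collapse_def by blast

lemma supp_less_collapse: "\<rho> \<in> DT T X \<Longrightarrow> s \<in> fst \<rho> \<Longrightarrow> lt s (\<theta> \<rho>)"
  using BH unfolding BH_collapse_def by blast

lemma collapse_inj:
  assumes "\<rho> \<in> DT T X" "\<pi> \<in> DT T X" "\<theta> \<rho> = \<theta> \<pi>"
  shows "\<rho> = \<pi>"
proof -
  have "\<not> lt (\<theta> \<rho>) (\<theta> \<rho>)" using lt_irrefl collapse_in_X assms(1) by blast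
  then have "\<not> DT_less T lt \<rho> \<pi>" "\<not> DT_less T lt \<pi> \<rho>"
    using collapse_less supp_less_collapse assms by metis+
  then show ?thesis using DT_less_trichotomy[OF assms(1,2)] by blast
qed

lemma collapse_less_iff:
  assumes \<rho>: "\<rho> \<in> DT T X" and \<pi>: "\<pi> \<in> DT T X"
  shows "lt (\<theta> \<rho>) (\<theta> \<pi>) \<longleftrightarrow>
    (DT_less T lt \<rho> \<pi> \<and> (\<forall>x\<in>fst \<rho>. lt x (\<theta> \<pi>))) \<or> (\<exists>y\<in>fst \<pi>. \<theta> \<rho> = y \<or> lt (\<theta> \<rho>) y)"
proof -
  have supp_X: "fst \<rho> \<subseteq> X" "fst \<pi> \<subseteq> X" using \<rho> \<pi> unfolding DT_def by auto
  have \<theta>_X: "\<theta> \<rho> \<in> X" "\<theta> \<pi> \<in> X" using collapse_in_X \<rho> \<pi> by auto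
  show ?thesis
  proof
    assume less: "lt (\<theta> \<rho>) (\<theta> \<pi>)"
    consider "DT_less T lt \<rho> \<pi>" | "DT_less T lt \<pi> \<rho>" | "\<rho> = \<pi>"
      using DT_less_trichotomy[OF \<rho> \<pi>] by blast
    then show "(DT_less T lt \<rho> \<pi> \<and> (\<forall>x\<in>fst \<rho>. lt x (\<theta> \<pi>))) \<or> (\<exists>y\<in>fst \<pi>. \<theta> \<rho> = y \<or> lt (\<theta> \<rho>) y)"
    proof cases
      case 1
      have "\<forall>x\<in>fst \<rho>. lt x (\<theta> \<pi>)"
        using supp_less_collapse[OF \<rho>] less lt_trans[OF _ \<theta>_X] supp_X by blast
      then show ?thesis using 1 by blast
    next
      case 2
      then have "\<not> (\<forall>y\<in>fst \<pi>. lt y (\<theta> \<rho>))"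
        using collapse_less[OF \<pi> \<rho>] less lt_asym[OF \<theta>_X] by blast
      then show ?thesis using lt_total[of _ "\<theta> \<rho>"] supp_X \<theta>_X by blast
    next
      case 3
      then show ?thesis using less lt_irrefl[OF \<theta>_X(1)] by simp
    qed
  next
    assume "(DT_less T lt \<rho> \<pi> \<and> (\<forall>x\<in>fst \<rho>. lt x (\<theta> \<pi>))) \<or> (\<exists>y\<in>fst \<pi>. \<theta> \<rho> = y \<or> lt (\<theta> \<rho>) y)"
    then show "lt (\<theta> \<rho>) (\<theta> \<pi>)"
      using collapse_less[OF \<rho> \<pi>] supp_less_collapse[OF \<pi>] lt_trans[OF \<theta>_X(1) _ \<theta>_X(2)] supp_X
      by blast
  qed
qed

end

section \<open>The embedding of \<vartheta>(T)\<close>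

lemma ball_set_zip_upt:
  "(\<forall>(i, x)\<in>set (zip [0..<length xs] xs). P i x) \<longleftrightarrow> (\<forall>i<length xs. P i (xs!i))"
proof -
  have "(i, x) \<in> set (zip [0..<length xs] xs) \<longleftrightarrow> i < length xs \<and> x = xs!i" for i x
    by (force simp: set_zip)
  then show ?thesis unfolding Ball_def split_paired_All by auto
qed

fun eval_trm :: "(nat set \<times> nat \<Rightarrow> nat) \<Rightarrow> trm \<Rightarrow> nat" where
  "eval_trm \<theta> (Th \<sigma> ss) = \<theta> (set (map (eval_trm \<theta>) ss), \<sigma>)"

lemma size_less_Th: "x \<in> set ss \<Longrightarrow> size x < size (Th \<sigma> ss)"
  using size_in_list_le[of x ss] by simp

context BH_fixed_point
begin

definition eval_faithful :: "trm \<Rightarrow> trm \<Rightarrow> bool" where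
  "eval_faithful s t \<longleftrightarrow> (in_theta T s \<longrightarrow> in_theta T t \<longrightarrow>
     eval_trm \<theta> s \<in> X \<and> eval_trm \<theta> t \<in> X \<and>
     (th_less T s t \<longleftrightarrow> lt (eval_trm \<theta> s) (eval_trm \<theta> t)) \<and>
     (eval_trm \<theta> s = eval_trm \<theta> t \<longrightarrow> s = t))"

lemma eval_children:
  assumes "in_theta T (Th \<sigma> ss)" and "\<forall>x\<in>set ss. \<forall>y\<in>set ss. eval_faithful x y"
  shows "sorted_wrt lt (map (eval_trm \<theta>) ss)" and "set (map (eval_trm \<theta>) ss) \<subseteq> X"
    and "(set (map (eval_trm \<theta>) ss), \<sigma>) \<in> DT T X"
proof -
  have children: "\<forall>x\<in>set ss. in_theta T x" "successively (th_less T) ss"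
    using assms(1) by auto
  then have faithful: "\<forall>x\<in>set ss. \<forall>y\<in>set ss. eval_trm \<theta> x \<in> X \<and>
      (th_less T x y \<longleftrightarrow> lt (eval_trm \<theta> x) (eval_trm \<theta> y))"
    using assms(2) unfolding eval_faithful_def by blast
  then show X: "set (map (eval_trm \<theta>) ss) \<subseteq> X" by auto
  have "successively lt (map (eval_trm \<theta>) ss)"
    unfolding successively_map using faithful by (auto intro: successively_mono[OF children(2)])
  then show sorted: "sorted_wrt lt (map (eval_trm \<theta>) ss)"
    using successively_imp_sorted_wrt X by blast
  show "(set (map (eval_trm \<theta>) ss), \<sigma>) \<in> DT T X"
    using sorted_in_DT[OF sorted X] assms(1) by simp
qed

lemma children_interleaving_iff_DT_less:
  assumes in_s: "in_theta T (Th \<sigma> ss)" and in_t: "in_theta T (Th \<tau> ts)"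
    and children: "\<forall>x\<in>set ss \<union> set ts. \<forall>y\<in>set ss \<union> set ts. eval_faithful x y"
  shows "(\<exists>f g.
      incr (length ss) (card (set ss \<union> set ts)) f \<and>
      incr (length ts) (card (set ss \<union> set ts)) g \<and>
      (\<forall>(i, x)\<in>set (zip [0..<length ss] ss). \<forall>(j, y)\<in>set (zip [0..<length ts] ts).
          (f i < g j \<longleftrightarrow> th_less T x y) \<and> (g j < f i \<longleftrightarrow> th_less T y x)) \<and>
      tlt T (card (set ss \<union> set ts))
        (mor T (length ss) (card (set ss \<union> set ts)) f \<sigma>)
        (mor T (length ts) (card (set ss \<union> set ts)) g \<tau>))
    \<longleftrightarrow> DT_less T lt (set (map (eval_trm \<theta>) ss), \<sigma>) (set (map (eval_trm \<theta>) ts), \<tau>)"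
proof -
  let ?e = "eval_trm \<theta>"
  have in_children: "\<forall>x\<in>set ss \<union> set ts. in_theta T x" using in_s in_t by auto
  then have child_less_iff: "th_less T x y \<longleftrightarrow> lt (?e x) (?e y)"
    if "x \<in> set ss \<union> set ts" "y \<in> set ss \<union> set ts" for x y
    using children that unfolding eval_faithful_def by blast
  have "inj_on ?e (set ss \<union> set ts)"
    using children in_children unfolding eval_faithful_def inj_on_def by blast
  then have card: "card (set ss \<union> set ts) = card (set (map ?e ss) \<union> set (map ?e ts))"
    by (metis card_image image_Un set_map)
  have ss: "sorted_wrt lt (map ?e ss)" "set (map ?e ss) \<subseteq> X"
    using eval_children[OF in_s] children by auto
  have ts: "sorted_wrt lt (map ?e ts)" "set (map ?e ts) \<subseteq> X"
    using eval_children[OF in_t] children by auto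
  have "\<sigma> \<in> fld T (length (map ?e ss))" "\<tau> \<in> fld T (length (map ?e ts))"
    using in_s in_t by auto
  from interleaving_iff_DT_less[OF ss ts this]
  show ?thesis
    using child_less_iff by (simp add: ball_set_zip_upt card)
qed

lemma th_less_iff_eval_less:
  assumes s: "s = Th \<sigma> ss" and t: "t = Th \<tau> ts"
    and in_s: "in_theta T s" and in_t: "in_theta T t"
    and children: "\<forall>x\<in>set ss \<union> set ts. \<forall>y\<in>set ss \<union> set ts. eval_faithful x y"
    and left: "\<forall>x\<in>set ss. eval_faithful x t" and right: "\<forall>y\<in>set ts. eval_faithful s y"
  shows "th_less T s t \<longleftrightarrow> lt (eval_trm \<theta> s) (eval_trm \<theta> t)"
proof -
  let ?e = "eval_trm \<theta>"
  define xs ys where "xs = map ?e ss" and "ys = map ?e ts"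
  have xs: "sorted_wrt lt xs" "set xs \<subseteq> X" "(set xs, \<sigma>) \<in> DT T X"
    using eval_children[of \<sigma> ss] in_s children s unfolding xs_def by auto
  have ys: "sorted_wrt lt ys" "set ys \<subseteq> X" "(set ys, \<tau>) \<in> DT T X"
    using eval_children[of \<tau> ts] in_t children t unfolding ys_def by auto
  have e_s: "?e s = \<theta> (set xs, \<sigma>)" and e_t: "?e t = \<theta> (set ys, \<tau>)"
    by (simp_all add: s t xs_def ys_def)
  have e_X: "?e s \<in> X" "?e t \<in> X" using e_s e_t collapse_in_X xs(3) ys(3) by auto
  have in_children: "\<forall>x\<in>set ss. in_theta T x" "\<forall>y\<in>set ts. in_theta T y"
    using in_s in_t s t by auto
  have left_iff: "th_less T x t \<longleftrightarrow> lt (?e x) (?e t)" if "x \<in> set ss" for x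
    using left in_children(1) in_t that unfolding eval_faithful_def by blast
  have right_iff: "s = y \<or> th_less T s y \<longleftrightarrow> ?e s = ?e y \<or> lt (?e s) (?e y)" if "y \<in> set ts" for y
    using right in_children(2) in_s that unfolding eval_faithful_def by blast
  have last_left: "(if ss = [] then True else th_less T (last ss) t) \<longleftrightarrow> (\<forall>x\<in>set xs. lt x (?e t))"
    using sorted_wrt_ball_less_iff_last[OF xs(1,2) e_X(2)] left_iff[of "last ss"]
    by (simp add: xs_def last_map)
  have last_right: "(if ts = [] then False else s = last ts \<or> th_less T s (last ts)) \<longleftrightarrow>
      (\<exists>y\<in>set ys. ?e s = y \<or> lt (?e s) y)"
    using sorted_wrt_bex_geq_iff_last[OF ys(1,2) e_X(1)] right_iff[of "last ts"]
    by (simp add: ys_def last_map)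
  have "th_less T s t \<longleftrightarrow> (DT_less T lt (set xs, \<sigma>) (set ys, \<tau>) \<and> (\<forall>x\<in>set xs. lt x (?e t))) \<or>
      (\<exists>y\<in>set ys. ?e s = y \<or> lt (?e s) y)"
    using children_interleaving_iff_DT_less[OF in_s[unfolded s] in_t[unfolded t] children] last_left last_right
    unfolding xs_def ys_def s t th_less.simps by blast
  also have "\<dots> \<longleftrightarrow> lt (?e s) (?e t)"
    using collapse_less_iff[OF xs(3) ys(3)] e_s e_t by simp
  finally show ?thesis .
qed

lemma eval_inj_Th:
  assumes in_s: "in_theta T (Th \<sigma> ss)" and in_t: "in_theta T (Th \<tau> ts)"
    and children: "\<forall>x\<in>set ss \<union> set ts. \<forall>y\<in>set ss \<union> set ts. eval_faithful x y"
    and eq: "eval_trm \<theta> (Th \<sigma> ss) = eval_trm \<theta> (Th \<tau> ts)"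
  shows "Th \<sigma> ss = Th \<tau> ts"
proof -
  let ?e = "eval_trm \<theta>"
  have ss: "sorted_wrt lt (map ?e ss)" "set (map ?e ss) \<subseteq> X" "(set (map ?e ss), \<sigma>) \<in> DT T X"
    using eval_children[OF in_s] children by auto
  have ts: "sorted_wrt lt (map ?e ts)" "set (map ?e ts) \<subseteq> X" "(set (map ?e ts), \<tau>) \<in> DT T X"
    using eval_children[OF in_t] children by auto
  have "(set (map ?e ss), \<sigma>) = (set (map ?e ts), \<tau>)"
    using collapse_inj[OF ss(3) ts(3)] eq by simp
  then have "map ?e ss = map ?e ts" and "\<sigma> = \<tau>"
    using sorted_wrt_set_eq[OF ss(1,2) ts(1,2)] by auto
  moreover have "inj_on ?e (set ss \<union> set ts)"
    using children in_s in_t unfolding eval_faithful_def inj_on_def by auto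
  ultimately show ?thesis by (simp add: inj_on_map_eq_map)
qed

lemma eval_in_X:
  assumes "in_theta T (Th \<sigma> ss)" and "\<forall>x\<in>set ss. \<forall>y\<in>set ss. eval_faithful x y"
  shows "eval_trm \<theta> (Th \<sigma> ss) \<in> X"
  using collapse_in_X[OF eval_children(3)[OF assms]] by simp

lemma eval_faithful_Th:
  assumes s: "s = Th \<sigma> ss" and t: "t = Th \<tau> ts"
    and children: "\<forall>x\<in>set ss \<union> set ts. \<forall>y\<in>set ss \<union> set ts. eval_faithful x y"
    and left: "\<forall>x\<in>set ss. eval_faithful x t" and right: "\<forall>y\<in>set ts. eval_faithful s y"
  shows "eval_faithful s t"
  unfolding eval_faithful_def
proof (intro impI conjI)
  assume in_s: "in_theta T s" and in_t: "in_theta T t"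
  show "eval_trm \<theta> s \<in> X" "eval_trm \<theta> t \<in> X"
    using eval_in_X in_s in_t children unfolding s t by auto
  show "th_less T s t \<longleftrightarrow> lt (eval_trm \<theta> s) (eval_trm \<theta> t)"
    using th_less_iff_eval_less[OF s t in_s in_t children left right] .
  show "s = t" if "eval_trm \<theta> s = eval_trm \<theta> t"
    using eval_inj_Th in_s in_t children that unfolding s t by blast
qed

text \<open>Pairs of children of s need not have a smaller size sum than (s, t), but they have a
  smaller maximal size; hence the lexicographic measure.\<close>

lemma eval_faithful: "eval_faithful s t"
proof (induction "(s, t)" arbitrary: s t
    rule: wf_induct[OF wf_measures[of "[\<lambda>(s, t). max (size s) (size t), \<lambda>(s, t). size s + size t]"]])
  case 1
  obtain \<sigma> ss \<tau> ts where s: "s = Th \<sigma> ss" and t: "t = Th \<tau> ts"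
    by (metis trm.exhaust)
  have IH: "eval_faithful x y"
    if "max (size x) (size y) < max (size s) (size t) \<or>
      max (size x) (size y) = max (size s) (size t) \<and> size x + size y < size s + size t" for x y
    using 1 that by (simp, blast)
  have child_size: "size x < max (size s) (size t)" if "x \<in> set ss \<union> set ts" for x
  proof -
    have "size x < size s \<or> size x < size t" using that size_less_Th s t by blast
    then show ?thesis by linarith
  qed
  show ?case
  proof (rule eval_faithful_Th[OF s t]; intro ballI IH)
    fix x y assume "x \<in> set ss \<union> set ts" "y \<in> set ss \<union> set ts"
    then show "max (size x) (size y) < max (size s) (size t) \<or>
      max (size x) (size y) = max (size s) (size t) \<and> size x + size y < size s + size t"
      using child_size by simp
  next
    fix x assume "x \<in> set ss"
    then have "size x < size s" using size_less_Th s by blast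
    then show "max (size x) (size t) < max (size s) (size t) \<or>
      max (size x) (size t) = max (size s) (size t) \<and> size x + size t < size s + size t"
      by linarith
  next
    fix y assume "y \<in> set ts"
    then have "size y < size t" using size_less_Th t by blast
    then show "max (size s) (size y) < max (size s) (size t) \<or>
      max (size s) (size y) = max (size s) (size t) \<and> size s + size y < size s + size t"
      by linarith
  qed
qed

end

theorem theorem4p5:
  fixes T :: praedil and X :: "nat set" and lt :: "nat \<Rightarrow> nat \<Rightarrow> bool"
    and \<theta> :: "nat set \<times> nat \<Rightarrow> nat"
  assumes "prae_dilator T"
    and "linord_on X lt"
    and "BH_collapse T X lt \<theta>"
  shows "\<exists>f :: trm \<Rightarrow> nat.
           (\<forall>s. in_theta T s \<longrightarrow> f s \<in> X) \<and>
           (\<forall>s t. in_theta T s \<longrightarrow> in_theta T t \<longrightarrow> (th_less T s t \<longleftrightarrow> lt (f s) (f t)))"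
proof -
  interpret BH_fixed_point X lt T \<theta>
    using assms by unfold_locales
  show ?thesis
    using eval_faithful unfolding eval_faithful_def by blast
qed

end
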